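(* Let $n,m\ge1$, $r>0$, let $\varphi_1,\dots,\varphi_n:\mathbb{R}\to[0,\infty)$ be nonnegative functions and $x_1,\dots,x_m\in\mathbb{R}$ such that for each $j$ there is $i$ with $\varphi_i(x_j)>0$. Define sequences as follows. Set $v^1_i=\sqrt{r/n}$ for $i=1,\dots,n$. For $k\ge1$, given $v^k\in[0,\infty)^n$, let $u^k\in[0,\infty)^n$ with $\sum_i(u^k_i)^2=r$ be a point at which $$\widehat l^{\,k}(u)=\prod_{j=1}^m\Big(\sum_{i=1}^n u_i v^k_i\varphi_i(x_j)\Big)$$ attains its maximum over the sphere $\{u\in\mathbb{R}^n:\sum_iu_i^2=r\}$; then let $\overline\theta^{k+1}>0$ be defined by $(\overline\theta^{k+1})^2\sum_{i=1}^n u^k_iv^k_i=r$ and set $v^{k+1}_i=\overline\theta^{k+1}\sqrt{u^k_iv^k_i}$, so that $\sum_i(v^{k+1}_i)^2=r$. Then $\lim_{k\to\infty}\overline\theta^k=1$.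
   Context: This is the outer iteration ("steps (i)–(iii)") for maximizing the likelihood $\prod_j\sum_i u_iv_i\varphi_i(x_j)$ subject to $\sum u_i^2=\sum v_i^2=r$, where step (ii) computes the maximizer $u^k$ with $v^k$ fixed. *)

theory Defs
  imports Complex_Main
begin

text \<open>Vectors in R^n are represented as functions nat => real, with only the
components i < n (i.e. indices 0..n-1) being relevant. The approximate likelihood
lhat(u) = prod_j sum_i u_i v_i phi_i(x_j).\<close>

definition lhat :: "nat \<Rightarrow> nat \<Rightarrow> (nat \<Rightarrow> real \<Rightarrow> real) \<Rightarrow> (nat \<Rightarrow> real)
    \<Rightarrow> (nat \<Rightarrow> real) \<Rightarrow> (nat \<Rightarrow> real) \<Rightarrow> real" where
  "lhat n m \<phi> x v u = (\<Prod>j<m. \<Sum>i<n. u i * v i * \<phi> i (x j))"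

end

theory Submission
  imports Defs
begin

text \<open>Since u(k) and v(k) both lie on the nonnegative part of the sphere of radius sqrt r, their
inner product is at most r, so every \<theta> is at least 1. The point v(k+1) also lies on the sphere and
its squared entries are \<theta>(k+1)^2 u(k)_i v(k)_i, so the maximality of u(k+1) gives
L(k+1) \<ge> lhat(v(k+1), v(k+1)) = \<theta>(k+1)^(2m) L(k) for the maximal values L(k) = lhat(v(k), u(k)).
Thus L is positive, nondecreasing and bounded (the products u(k)_i v(k)_i are at most r), hence
converges to a positive limit; the ratios L(k+1) / L(k) tend to 1 and squeeze \<theta>^(2m), hence \<theta>, to 1.\<close>

lemma sum_mult_le_of_sum_squares_eq:
  fixes u v :: "'a \<Rightarrow> real"
  assumes "(\<Sum>i\<in>A. (u i)\<^sup>2) = r" and "(\<Sum>i\<in>A. (v i)\<^sup>2) = r"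
  shows "(\<Sum>i\<in>A. u i * v i) \<le> r"
proof -
  have "(\<Sum>i\<in>A. 2 * (u i * v i)) \<le> (\<Sum>i\<in>A. (u i)\<^sup>2 + (v i)\<^sup>2)"
    by (intro sum_mono) (use sum_squares_bound in \<open>simp add: mult.assoc\<close>)
  then show ?thesis
    using assms by (simp add: sum.distrib sum_distrib_left[symmetric])
qed

lemma one_le_of_square_mult_eq:
  fixes \<theta> s r :: real
  assumes "0 < r" and "s \<le> r" and "0 < \<theta>" and "\<theta>\<^sup>2 * s = r"
  shows "1 \<le> \<theta>"
proof (rule ccontr)
  assume "\<not> 1 \<le> \<theta>"
  then have "\<theta>\<^sup>2 < 1"
    using assms(3) by (simp add: power_less_one_iff)
  moreover have "0 < s"
    using zero_less_mult_pos[of "\<theta>\<^sup>2" s] assms by simp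
  ultimately have "\<theta>\<^sup>2 * s < s"
    by simp
  then show False
    using assms by simp
qed

lemma tendsto_one_of_power_tendsto_one:
  fixes c :: "nat \<Rightarrow> real"
  assumes "\<And>k. 1 \<le> c k" and "0 < p" and "(\<lambda>k. c k ^ p) \<longlonglongrightarrow> 1"
  shows "c \<longlonglongrightarrow> 1"
proof (rule tendsto_sandwich[of "\<lambda>_. 1" _ _ "\<lambda>k. c k ^ p"])
  show "\<forall>\<^sub>F k in sequentially. c k \<le> c k ^ p"
    using assms(1,2) by (simp add: self_le_power)
qed (use assms in auto)

lemma growth_factors_tendsto_one:
  fixes a c :: "nat \<Rightarrow> real"
  assumes a0: "0 < a 0" and bounded: "\<And>k. a k \<le> B"
    and c_ge: "\<And>k. 1 \<le> c k" and growth: "\<And>k. c k * a k \<le> a (Suc k)"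
  shows "c \<longlonglongrightarrow> 1"
proof -
  have step: "a k \<le> a (Suc k) \<and> 0 < a (Suc k)" if "0 < a k" for k
  proof -
    have "a k \<le> c k * a k"
      using mult_right_mono[OF c_ge[of k], of "a k"] that by simp
    then show ?thesis
      using growth[of k] that by linarith
  qed
  have a_pos: "0 < a k" for k
    by (induction k) (use a0 step in auto)
  have "incseq a"
    using step a_pos by (intro incseq_SucI) blast
  then obtain L where L: "a \<longlonglongrightarrow> L" and a_le_L: "\<And>k. a k \<le> L"
    using incseq_convergent[of a B] bounded by blast
  have "0 < L"
    using a0 a_le_L[of 0] by linarith
  then have ratio: "(\<lambda>k. a (Suc k) / a k) \<longlonglongrightarrow> 1"
    using tendsto_divide[OF LIMSEQ_Suc[OF L] L] by simp
  show ?thesis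
  proof (rule tendsto_sandwich[of "\<lambda>_. 1" _ _ "\<lambda>k. a (Suc k) / a k"])
    show "\<forall>\<^sub>F k in sequentially. c k \<le> a (Suc k) / a k"
      using growth a_pos by (simp add: pos_le_divide_eq)
  qed (use c_ge ratio in auto)
qed

lemma lhat_diag_eq_power_mult:
  assumes "\<And>i. i < n \<Longrightarrow> w i * w i = c * (u i * v i)"
  shows "lhat n m \<phi> x w w = c ^ m * lhat n m \<phi> x v u"
proof -
  have "(\<Sum>i<n. w i * w i * \<phi> i (x j)) = c * (\<Sum>i<n. u i * v i * \<phi> i (x j))" for j
    using assms by (simp add: sum_distrib_left mult.assoc)
  then show ?thesis
    by (simp add: lhat_def prod.distrib)
qed

lemma lhat_pos:
  assumes phi_nonneg: "\<And>i t. i < n \<Longrightarrow> 0 \<le> \<phi> i t"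
    and phi_pos: "\<And>j. j < m \<Longrightarrow> \<exists>i<n. 0 < \<phi> i (x j)"
    and uv_pos: "\<And>i. i < n \<Longrightarrow> 0 < u i * v i"
  shows "0 < lhat n m \<phi> x v u"
  unfolding lhat_def
proof (intro prod_pos ballI)
  fix j assume "j \<in> {..<m}"
  then obtain i0 where "i0 < n" and "0 < \<phi> i0 (x j)"
    using phi_pos by auto
  moreover have "0 \<le> u i * v i * \<phi> i (x j)" if "i < n" for i
    using uv_pos[OF that] phi_nonneg[OF that] by simp
  ultimately show "0 < (\<Sum>i<n. u i * v i * \<phi> i (x j))"
    using uv_pos by (intro sum_pos2[where i = i0]) auto
qed

lemma lhat_le_of_sum_le:
  assumes phi_nonneg: "\<And>i t. i < n \<Longrightarrow> 0 \<le> \<phi> i t"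
    and uv_nonneg: "\<And>i. i < n \<Longrightarrow> 0 \<le> u i * v i"
    and sum_le: "(\<Sum>i<n. u i * v i) \<le> c"
  shows "lhat n m \<phi> x v u \<le> (\<Prod>j<m. \<Sum>i<n. c * \<phi> i (x j))"
  unfolding lhat_def
proof (intro prod_mono conjI)
  have term_le: "u i * v i \<le> c" if "i < n" for i
    using member_le_sum[of i "{..<n}" "\<lambda>i. u i * v i"] uv_nonneg sum_le that by force
  fix j
  show "0 \<le> (\<Sum>i<n. u i * v i * \<phi> i (x j))"
    using uv_nonneg phi_nonneg by (intro sum_nonneg) simp
  show "(\<Sum>i<n. u i * v i * \<phi> i (x j)) \<le> (\<Sum>i<n. c * \<phi> i (x j))"
    using term_le phi_nonneg by (intro sum_mono mult_right_mono) auto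
qed

locale lhat_iteration =
  fixes n m :: nat and r :: real
    and \<phi> :: "nat \<Rightarrow> real \<Rightarrow> real" and x :: "nat \<Rightarrow> real"
    and u v :: "nat \<Rightarrow> nat \<Rightarrow> real" and \<theta> :: "nat \<Rightarrow> real"
  assumes n: "n \<ge> 1" and m: "m \<ge> 1" and r: "r > 0"
    and phi_nonneg: "\<And>i t. i < n \<Longrightarrow> \<phi> i t \<ge> 0"
    and phi_pos: "\<And>j. j < m \<Longrightarrow> \<exists>i<n. \<phi> i (x j) > 0"
    and v1: "\<And>i. i < n \<Longrightarrow> v 1 i = sqrt (r / real n)"
    and u_nonneg: "\<And>k i. k \<ge> 1 \<Longrightarrow> i < n \<Longrightarrow> u k i \<ge> 0"
    and u_sphere: "\<And>k. k \<ge> 1 \<Longrightarrow> (\<Sum>i<n. (u k i)\<^sup>2) = r"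
    and u_max: "\<And>k w. k \<ge> 1 \<Longrightarrow> (\<Sum>i<n. (w i)\<^sup>2) = r \<Longrightarrow>
                   lhat n m \<phi> x (v k) w \<le> lhat n m \<phi> x (v k) (u k)"
    and theta_pos: "\<And>k. k \<ge> 1 \<Longrightarrow> \<theta> (k + 1) > 0"
    and theta_eq: "\<And>k. k \<ge> 1 \<Longrightarrow> (\<theta> (k + 1))\<^sup>2 * (\<Sum>i<n. u k i * v k i) = r"
    and v_next: "\<And>k i. k \<ge> 1 \<Longrightarrow> i < n \<Longrightarrow> v (k + 1) i = \<theta> (k + 1) * sqrt (u k i * v k i)"
begin

lemma v_nonneg:
  assumes "k \<ge> 1" and "i < n"
  shows "0 \<le> v k i"
  using assms(1)
proof (induction k rule: nat_induct_at_least)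
  case base
  then show ?case
    using v1[OF assms(2)] r by simp
next
  case (Suc k)
  then have "0 \<le> u k i * v k i"
    using u_nonneg[OF _ assms(2)] by simp
  then show ?case
    using v_next[OF Suc.hyps assms(2)] theta_pos[OF Suc.hyps] by simp
qed

lemma v_next_square:
  assumes "k \<ge> 1" and "i < n"
  shows "v (k + 1) i * v (k + 1) i = (\<theta> (k + 1))\<^sup>2 * (u k i * v k i)"
  using v_next[OF assms] u_nonneg[OF assms] v_nonneg[OF assms]
  by (simp add: power2_eq_square algebra_simps)

lemma v_sphere:
  assumes "k \<ge> 1"
  shows "(\<Sum>i<n. (v k i)\<^sup>2) = r"
proof (cases "k = 1")
  case True
  then show ?thesis
    using v1 r n by (simp add: real_sqrt_pow2)
next
  case False
  then obtain k' where k: "k = k' + 1" and "k' \<ge> 1"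
    using assms by (cases k) auto
  then have "(\<Sum>i<n. (v k i)\<^sup>2) = (\<Sum>i<n. (\<theta> k)\<^sup>2 * (u k' i * v k' i))"
    using v_next_square by (simp add: power2_eq_square)
  also have "\<dots> = r"
    using theta_eq[of k'] k \<open>k' \<ge> 1\<close> by (simp add: sum_distrib_left)
  finally show ?thesis .
qed

lemma uv_sum_le:
  assumes "k \<ge> 1"
  shows "(\<Sum>i<n. u k i * v k i) \<le> r"
  using assms by (intro sum_mult_le_of_sum_squares_eq u_sphere v_sphere)

lemma theta_ge_one:
  assumes "k \<ge> 1"
  shows "1 \<le> \<theta> (k + 1)"
  using one_le_of_square_mult_eq[OF r uv_sum_le[OF assms] theta_pos[OF assms] theta_eq[OF assms]] .

lemma lhat_growth:
  assumes "k \<ge> 1"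
  shows "\<theta> (k + 1) ^ (2 * m) * lhat n m \<phi> x (v k) (u k)
           \<le> lhat n m \<phi> x (v (k + 1)) (u (k + 1))"
proof -
  have "\<theta> (k + 1) ^ (2 * m) * lhat n m \<phi> x (v k) (u k) = lhat n m \<phi> x (v (k + 1)) (v (k + 1))"
    using lhat_diag_eq_power_mult[OF v_next_square[OF assms]] by (simp add: power_mult)
  also have "\<dots> \<le> lhat n m \<phi> x (v (k + 1)) (u (k + 1))"
    using assms by (intro u_max v_sphere) simp_all
  finally show ?thesis .
qed

lemma lhat_initial_pos: "0 < lhat n m \<phi> x (v 1) (u 1)"
proof -
  have "0 < lhat n m \<phi> x (v 1) (v 1)"
    using r v1 n by (intro lhat_pos phi_nonneg phi_pos) simp_all
  also have "\<dots> \<le> lhat n m \<phi> x (v 1) (u 1)"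
    by (intro u_max v_sphere) simp_all
  finally show ?thesis .
qed

lemma lhat_bounded:
  assumes "k \<ge> 1"
  shows "lhat n m \<phi> x (v k) (u k) \<le> (\<Prod>j<m. \<Sum>i<n. r * \<phi> i (x j))"
  using assms u_nonneg v_nonneg by (intro lhat_le_of_sum_le phi_nonneg uv_sum_le) simp_all

lemma theta_tendsto_one: "\<theta> \<longlonglongrightarrow> 1"
proof -
  have theta_ge_one_shifted: "1 \<le> \<theta> (k + 2)" for k
    using theta_ge_one[of "k + 1"] by simp
  have "(\<lambda>k. \<theta> (k + 2) ^ (2 * m)) \<longlonglongrightarrow> 1"
  proof (rule growth_factors_tendsto_one[where a = "\<lambda>k. lhat n m \<phi> x (v (k + 1)) (u (k + 1))"
        and B = "\<Prod>j<m. \<Sum>i<n. r * \<phi> i (x j)"])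
    fix k
    show "0 < lhat n m \<phi> x (v (0 + 1)) (u (0 + 1))"
      using lhat_initial_pos by simp
    show "lhat n m \<phi> x (v (k + 1)) (u (k + 1)) \<le> (\<Prod>j<m. \<Sum>i<n. r * \<phi> i (x j))"
      by (rule lhat_bounded) simp
    show "1 \<le> \<theta> (k + 2) ^ (2 * m)"
      using theta_ge_one_shifted by (rule one_le_power)
    show "\<theta> (k + 2) ^ (2 * m) * lhat n m \<phi> x (v (k + 1)) (u (k + 1))
            \<le> lhat n m \<phi> x (v (Suc k + 1)) (u (Suc k + 1))"
      using lhat_growth[of "k + 1"] by simp
  qed
  then have "(\<lambda>k. \<theta> (k + 2)) \<longlonglongrightarrow> 1"
    using m by (intro tendsto_one_of_power_tendsto_one[OF theta_ge_one_shifted]) simp_all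
  then show ?thesis
    by (rule LIMSEQ_offset)
qed

end

theorem lemma6:
  fixes n m :: nat and r :: real
    and \<phi> :: "nat \<Rightarrow> real \<Rightarrow> real" and x :: "nat \<Rightarrow> real"
    and u v :: "nat \<Rightarrow> nat \<Rightarrow> real" and \<theta> :: "nat \<Rightarrow> real"
  assumes n: "n \<ge> 1" and m: "m \<ge> 1" and r: "r > 0"
    and phi_nonneg: "\<And>i t. i < n \<Longrightarrow> \<phi> i t \<ge> 0"
    and phi_pos: "\<And>j. j < m \<Longrightarrow> \<exists>i<n. \<phi> i (x j) > 0"
    and v1: "\<And>i. i < n \<Longrightarrow> v 1 i = sqrt (r / real n)"
    and u_nonneg: "\<And>k i. k \<ge> 1 \<Longrightarrow> i < n \<Longrightarrow> u k i \<ge> 0"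
    and u_sphere: "\<And>k. k \<ge> 1 \<Longrightarrow> (\<Sum>i<n. (u k i)\<^sup>2) = r"
    and u_max: "\<And>k w. k \<ge> 1 \<Longrightarrow> (\<Sum>i<n. (w i)\<^sup>2) = r \<Longrightarrow>
                   lhat n m \<phi> x (v k) w \<le> lhat n m \<phi> x (v k) (u k)"
    and theta_pos: "\<And>k. k \<ge> 1 \<Longrightarrow> \<theta> (k + 1) > 0"
    and theta_eq: "\<And>k. k \<ge> 1 \<Longrightarrow> (\<theta> (k + 1))\<^sup>2 * (\<Sum>i<n. u k i * v k i) = r"
    and v_next: "\<And>k i. k \<ge> 1 \<Longrightarrow> i < n \<Longrightarrow> v (k + 1) i = \<theta> (k + 1) * sqrt (u k i * v k i)"
  shows "\<theta> \<longlonglongrightarrow> 1"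
proof -
  interpret lhat_iteration n m r \<phi> x u v \<theta>
    by unfold_locales (fact assms)+
  show ?thesis
    by (fact theta_tendsto_one)
qed

end
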